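(* Let $n,d\in\mathbf{N}$ and let $\overline{F},\overline{G}:\mathbf{N}^d\to\mathbf{Z}_+$ be order-reversing functions such that $\overline{F}_{\mathbf{a}}=\overline{G}_{\mathbf{a}}=0$ for every upper boundary point $\mathbf{a}$ of $[n]^d$. Let $F:=\overline{F}|_{[n]^d}$ and $G:=\overline{G}|_{[n]^d}$. Then \[d_{\mathrm{I}}(\overline{F},\overline{G})=\min\{k\in\{0,1,\dots,n-1\}:\text{the $k$-test for $(F,G)$ returns "Yes"}\}.\]
   Context: $\mathbf{N}=\{1,2,\dots\}$ with the product order on $\mathbf{N}^d$; $[n]=\{1,\dots,n\}$ and $[n]^d\subseteq\mathbf{N}^d$. A point $\mathbf{a}=(a_1,\dots,a_d)\in[n]^d$ is an upper boundary point of $[n]^d$ if $a_i=n$ for some $i$. Order-reversing means $\mathbf{a}\le\mathbf{b}\Rightarrow \overline{F}_{\mathbf{a}}\ge\overline{F}_{\mathbf{b}}$. The interleaving distance between order-reversing $\overline{F},\overline{G}:\mathbf{N}^d\to\mathbf{Z}_+$ (regarded as functors into the poset $\mathbf{Z}_+^{\mathrm{op}}$) is $d_{\mathrm{I}}(\overline{F},\overline{G}):=\inf\{k\in\mathbf{Z}_+:\forall\mathbf{a}\in\mathbf{N}^d,\ \overline{F}_{\mathbf{a}}\ge\overline{G}_{\mathbf{a}+k(1,\dots,1)}\text{ and }\overline{G}_{\mathbf{a}}\ge\overline{F}_{\mathbf{a}+k(1,\dots,1)}\}$. For $F:[n]^d\to\mathbf{Z}_+$ and $k\in\{0,\dots,n-1\}$,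 the lower-left block $F|_{[n-k]^d}$ is the restriction to $[n-k]^d$ and the upper-right block $F|^{[n-k]^d}:[n-k]^d\to\mathbf{Z}_+$ is $\mathbf{a}\mapsto F_{\mathbf{a}+k(1,\dots,1)}$. For functions $H,K$ on the same domain, $H\ge K$ means pointwise. The $k$-test for $(F,G)$ returns "Yes" iff $F|_{[n-k]^d}\ge G|^{[n-k]^d}$ and $G|_{[n-k]^d}\ge F|^{[n-k]^d}$, and "No" otherwise. *)

theory Defs
  imports Main
begin

text \<open>Points of N^d (N = {1,2,...}) are functions from a finite index type 'd
  (with CARD('d) = d >= 1) to nat with all coordinates >= 1. Z_+ is nat.\<close>

definition Npt :: "('d \<Rightarrow> nat) \<Rightarrow> bool" where
  "Npt a \<longleftrightarrow> (\<forall>i. 1 \<le> a i)"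

definition in_grid :: "nat \<Rightarrow> ('d \<Rightarrow> nat) \<Rightarrow> bool" where
  "in_grid n a \<longleftrightarrow> (\<forall>i. 1 \<le> a i \<and> a i \<le> n)"

definition upper_boundary :: "nat \<Rightarrow> ('d \<Rightarrow> nat) \<Rightarrow> bool" where
  "upper_boundary n a \<longleftrightarrow> in_grid n a \<and> (\<exists>i. a i = n)"

definition shift :: "('d \<Rightarrow> nat) \<Rightarrow> nat \<Rightarrow> ('d \<Rightarrow> nat)" where
  "shift a k = (\<lambda>i. a i + k)"

definition order_reversing :: "(('d \<Rightarrow> nat) \<Rightarrow> nat) \<Rightarrow> bool" where
  "order_reversing F \<longleftrightarrow>
     (\<forall>a b. Npt a \<longrightarrow> Npt b \<longrightarrow> a \<le> b \<longrightarrow> F b \<le> F a)"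

definition interleaving_dist ::
  "(('d \<Rightarrow> nat) \<Rightarrow> nat) \<Rightarrow> (('d \<Rightarrow> nat) \<Rightarrow> nat) \<Rightarrow> nat" where
  "interleaving_dist F G =
     Inf {k. \<forall>a. Npt a \<longrightarrow> F a \<ge> G (shift a k) \<and> G a \<ge> F (shift a k)}"

definition grid_restrict :: "nat \<Rightarrow> (('d \<Rightarrow> nat) \<Rightarrow> nat) \<Rightarrow> (('d \<Rightarrow> nat) \<Rightarrow> nat)" where
  "grid_restrict n F = (\<lambda>a. if in_grid n a then F a else undefined)"

definition lower_left :: "nat \<Rightarrow> nat \<Rightarrow> (('d \<Rightarrow> nat) \<Rightarrow> nat) \<Rightarrow> (('d \<Rightarrow> nat) \<Rightarrow> nat)" where
  "lower_left n k F = (\<lambda>a. if in_grid (n - k) a then F a else undefined)"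

definition upper_right :: "nat \<Rightarrow> nat \<Rightarrow> (('d \<Rightarrow> nat) \<Rightarrow> nat) \<Rightarrow> (('d \<Rightarrow> nat) \<Rightarrow> nat)" where
  "upper_right n k F = (\<lambda>a. if in_grid (n - k) a then F (shift a k) else undefined)"

definition ge_on_grid :: "nat \<Rightarrow> (('d \<Rightarrow> nat) \<Rightarrow> nat) \<Rightarrow> (('d \<Rightarrow> nat) \<Rightarrow> nat) \<Rightarrow> bool" where
  "ge_on_grid m H K \<longleftrightarrow> (\<forall>a. in_grid m a \<longrightarrow> H a \<ge> K a)"

definition k_test :: "nat \<Rightarrow> nat \<Rightarrow> (('d \<Rightarrow> nat) \<Rightarrow> nat) \<Rightarrow> (('d \<Rightarrow> nat) \<Rightarrow> nat) \<Rightarrow> bool" where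
  "k_test n k F G \<longleftrightarrow>
     ge_on_grid (n - k) (lower_left n k F) (upper_right n k G) \<and>
     ge_on_grid (n - k) (lower_left n k G) (upper_right n k F)"

end

theory Submission
  imports Defs
begin

text \<open>Order reversal propagates the vanishing on the upper boundary of [n]^d to every point
  having a coordinate \<open>\<ge> n\<close>. Hence the \<open>k\<close>-interleaving inequalities at \<open>a\<close> hold
  trivially unless \<open>a \<in> [n-k]^d\<close>, and there, since \<open>a\<close> and \<open>a + k(1,\<dots>,1)\<close> both lie in
  [n]^d, they are exactly the \<open>k\<close>-test. Moreover shifting by \<open>n - 1\<close> moves every point to where both functions
  vanish, so \<open>n - 1\<close> is an interleaving and the infimum defining the distance is attained
  below \<open>n\<close>.\<close>

definition interleaved :: "nat \<Rightarrow> (('d \<Rightarrow> nat) \<Rightarrow> nat) \<Rightarrow> (('d \<Rightarrow> nat) \<Rightarrow> nat) \<Rightarrow> bool" where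
  "interleaved k F G \<longleftrightarrow>
     (\<forall>a. Npt a \<longrightarrow> G (shift a k) \<le> F a \<and> F (shift a k) \<le> G a)"

lemma interleaving_dist_eq_Inf_interleaved:
  "interleaving_dist F G = Inf {k. interleaved k F G}"
  by (simp add: interleaving_dist_def interleaved_def)

lemma Npt_shift: "Npt a \<Longrightarrow> Npt (shift a k)"
  by (simp add: Npt_def shift_def trans_le_add1)

lemma in_grid_diff_imp_in_grid:
  assumes "in_grid (n - k) a"
  shows "in_grid n a" and "in_grid n (shift a k)"
proof -
  have "k < n"
    using assms by (auto simp: in_grid_def)
  then have "1 \<le> a i \<and> a i + k \<le> n" for i
    using assms by (simp add: in_grid_def le_diff_conv2)
  then show "in_grid n a" and "in_grid n (shift a k)"
    by (auto simp: in_grid_def shift_def intro: add_leD1 trans_le_add1)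
qed

lemma not_in_grid_diff_imp_shift_beyond:
  assumes "Npt a" and "\<not> in_grid (n - k) a"
  obtains i where "n \<le> shift a k i"
proof -
  obtain i where "n - k < a i"
    using assms by (auto simp: Npt_def in_grid_def not_le)
  then show thesis
    using that[of i] by (simp add: shift_def)
qed

lemma order_reversing_vanishes_beyond_grid:
  fixes F :: "('d \<Rightarrow> nat) \<Rightarrow> nat"
  assumes "1 \<le> n" and "order_reversing F"
    and boundary: "\<And>b. upper_boundary n b \<Longrightarrow> F b = 0"
    and "Npt a" and "n \<le> a i"
  shows "F a = 0"
proof -
  define b where "b = (\<lambda>j. min (a j) n)"
  have "b i = n"
    using assms(5) by (simp add: b_def)
  then have "upper_boundary n b"
    using assms(1,4) by (auto simp: b_def upper_boundary_def in_grid_def Npt_def)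
  moreover have "Npt b" "b \<le> a"
    using assms(1,4) by (auto simp: b_def Npt_def le_fun_def)
  ultimately have "F a \<le> F b" and "F b = 0"
    using assms(2,4) boundary by (auto simp: order_reversing_def)
  then show ?thesis
    by simp
qed

context
  fixes F G :: "('d \<Rightarrow> nat) \<Rightarrow> nat" and n :: nat
  assumes n: "1 \<le> n"
    and F: "order_reversing F" and G: "order_reversing G"
    and boundary: "\<And>a. upper_boundary n a \<Longrightarrow> F a = 0 \<and> G a = 0"
begin

lemma vanish_beyond_grid:
  assumes "Npt a" and "n \<le> a i"
  shows "F a = 0" and "G a = 0"
  using order_reversing_vanishes_beyond_grid[OF n F _ assms]
    order_reversing_vanishes_beyond_grid[OF n G _ assms] boundary
  by auto

lemma interleaved_iff_k_test:
  "interleaved k F G \<longleftrightarrow> k_test n k (grid_restrict n F) (grid_restrict n G)"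
proof
  assume "interleaved k F G"
  then have "G (shift a k) \<le> F a \<and> F (shift a k) \<le> G a" if "in_grid (n - k) a" for a
    using that by (auto simp: interleaved_def in_grid_def Npt_def)
  then show "k_test n k (grid_restrict n F) (grid_restrict n G)"
    by (simp add: k_test_def ge_on_grid_def lower_left_def upper_right_def
        grid_restrict_def in_grid_diff_imp_in_grid)
next
  assume test: "k_test n k (grid_restrict n F) (grid_restrict n G)"
  show "interleaved k F G"
    unfolding interleaved_def
  proof (intro allI impI)
    fix a :: "'d \<Rightarrow> nat"
    assume a: "Npt a"
    show "G (shift a k) \<le> F a \<and> F (shift a k) \<le> G a"
    proof (cases "in_grid (n - k) a")
      case True
      with test show ?thesis
        by (simp add: k_test_def ge_on_grid_def lower_left_def upper_right_def
            grid_restrict_def in_grid_diff_imp_in_grid)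
    next
      case False
      with a obtain i where "n \<le> shift a k i"
        by (rule not_in_grid_diff_imp_shift_beyond)
      then show ?thesis
        using vanish_beyond_grid[OF Npt_shift[OF a]] by simp
    qed
  qed
qed

lemma interleaved_n_minus_1: "interleaved (n - 1) F G"
proof -
  obtain i :: 'd where True
    by simp
  have "F (shift a (n - 1)) = 0 \<and> G (shift a (n - 1)) = 0" if "Npt a" for a
  proof -
    have "1 \<le> a i"
      using that by (simp add: Npt_def)
    then have "n \<le> shift a (n - 1) i"
      using n by (simp add: shift_def)
    then show ?thesis
      using vanish_beyond_grid[OF Npt_shift[OF that]] by simp
  qed
  then show ?thesis
    by (simp add: interleaved_def)
qed

end

lemma Inf_nat_eq_Min_below:
  assumes "P m" and "m < n"
  shows "Inf {k::nat. P k} = Min {k \<in> {0..<n}. P k}"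
proof (rule sym, rule Min_eqI)
  show "Inf {k. P k} \<in> {k \<in> {0..<n}. P k}"
    using assms Inf_nat_def1[of "{k. P k}"] cInf_lower[of m "{k. P k}"] by auto
qed (auto intro: cInf_lower)

theorem proposition5p3:
  fixes Fbar Gbar :: "('d::finite \<Rightarrow> nat) \<Rightarrow> nat" and n :: nat
  assumes "1 \<le> n"
    and "order_reversing Fbar" and "order_reversing Gbar"
    and "\<And>a. upper_boundary n a \<Longrightarrow> Fbar a = 0 \<and> Gbar a = 0"
  shows "interleaving_dist Fbar Gbar
           = Min {k \<in> {0..<n}. k_test n k (grid_restrict n Fbar) (grid_restrict n Gbar)}"
proof -
  have "interleaving_dist Fbar Gbar = Inf {k. interleaved k Fbar Gbar}"
    by (rule interleaving_dist_eq_Inf_interleaved)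
  also have "\<dots> = Min {k \<in> {0..<n}. interleaved k Fbar Gbar}"
    using interleaved_n_minus_1[OF assms] \<open>1 \<le> n\<close> by (intro Inf_nat_eq_Min_below) auto
  also have "\<dots> = Min {k \<in> {0..<n}. k_test n k (grid_restrict n Fbar) (grid_restrict n Gbar)}"
    using interleaved_iff_k_test[OF assms] by simp
  finally show ?thesis .
qed

end
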